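(* Let $A$ be a unital $C^*$-algebra and let $a\in A$ be invertible. Then $a$ is unitary if and only if $\rho(a^*,a^{-1})=0$, $r_\sigma(a)=\|a\|$ and $r_\sigma(a^{-1})=\|a^{-1}\|$.
   Context: For $a,b\in A$ and $n\geq 0$ put $C_{a,b}^n\mathbf 1=\sum_{k=0}^n(-1)^k\binom{n}{k}a^{n-k}b^k$ (with $a^0=b^0=\mathbf 1$), and $\rho(a,b)=\limsup_{n\to\infty}\|C_{a,b}^n\mathbf 1\|^{1/n}$. $r_\sigma(x)$ denotes the spectral radius of $x$. *)

theory Defs
  imports "HOL-Analysis.Analysis"
begin

class scaleC =
  fixes scaleC :: "complex \<Rightarrow> 'a \<Rightarrow> 'a" (infixr "*\<^sub>C" 75)

class cstar_star =
  fixes cstar :: "'a \<Rightarrow> 'a"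

class unital_cstar_algebra = scaleC + cstar_star + real_normed_algebra_1 + banach +
  assumes scaleR_scaleC: "scaleR r x = scaleC (complex_of_real r) x"
  and scaleC_add_right: "scaleC c (x + y) = scaleC c x + scaleC c y"
  and scaleC_add_left: "scaleC (c + d) x = scaleC c x + scaleC d x"
  and scaleC_scaleC: "scaleC c (scaleC d x) = scaleC (c * d) x"
  and scaleC_one: "scaleC 1 x = x"
  and norm_scaleC: "norm (scaleC c x) = cmod c * norm x"
  and mult_scaleC_left: "(scaleC c x) * y = scaleC c (x * y)"
  and mult_scaleC_right: "x * (scaleC c y) = scaleC c (x * y)"
  and cstar_cstar: "cstar (cstar x) = x"
  and cstar_add: "cstar (x + y) = cstar x + cstar y"
  and cstar_scaleC: "cstar (scaleC c x) = scaleC (cnj c) (cstar x)"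
  and cstar_mult: "cstar (x * y) = cstar y * cstar x"
  and cstar_identity: "norm (cstar x * x) = norm x ^ 2"

definition alg_invertible :: "'a::unital_cstar_algebra \<Rightarrow> bool" where
  "alg_invertible x \<longleftrightarrow> (\<exists>y. x * y = 1 \<and> y * x = 1)"

definition alg_unitary :: "'a::unital_cstar_algebra \<Rightarrow> bool" where
  "alg_unitary u \<longleftrightarrow> cstar u * u = 1 \<and> u * cstar u = 1"

definition alg_spectrum :: "'a::unital_cstar_algebra \<Rightarrow> complex set" where
  "alg_spectrum x = {z. \<not> alg_invertible (x - scaleC z 1)}"

definition spectral_radius :: "'a::unital_cstar_algebra \<Rightarrow> real" where
  "spectral_radius x = Sup (cmod ` alg_spectrum x)"

definition Cab_one :: "'a::unital_cstar_algebra \<Rightarrow> 'a \<Rightarrow> nat \<Rightarrow> 'a" where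
  "Cab_one a b n = (\<Sum>k\<le>n. ((-1) ^ k * of_nat (n choose k)) * (a ^ (n - k) * b ^ k))"

definition rho :: "'a::unital_cstar_algebra \<Rightarrow> 'a \<Rightarrow> ereal" where
  "rho a b = limsup (\<lambda>n. ereal (root n (norm (Cab_one a b n))))"

end

theory Submission
  imports Defs
begin

text \<open>Write \<open>b\<close> for the inverse of \<open>a\<close>. If \<open>r(a) = \<parallel>a\<parallel>\<close>, then \<open>\<parallel>a^n\<parallel> = \<parallel>a\<parallel>^n\<close>, so by the
  C*-identity \<open>\<parallel>a\<parallel>^(2n) = \<parallel>(a*)^n a^n\<parallel>\<close>. Expanding \<open>(a*)^n a^n = \<Sum>k. (n choose k) C^k a^k\<close> with
  \<open>C^k = C^k_{a*,b} 1\<close>, and using that \<open>\<rho>(a*, b) = 0\<close> makes \<open>\<parallel>C^k\<parallel> \<le> K \<epsilon>^k\<close> for every \<open>\<epsilon> > 0\<close>,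
  gives \<open>\<parallel>a\<parallel>^(2n) \<le> K (1 + \<epsilon> \<parallel>a\<parallel>)^n\<close>, whence \<open>\<parallel>a\<parallel> \<le> 1\<close>; symmetrically \<open>\<parallel>b\<parallel> \<le> 1\<close>.

  An invertible contraction with contractive inverse is unitary: \<open>p = a* a\<close> is self-adjoint with
  spectrum on the unit circle, so \<open>p^2 = 1\<close>, and \<open>e = (1 - p)/2\<close> is a projection with
  \<open>(a e)* (a e) = -e\<close>. Then \<open>2 (a e)(a e)* = e + e + (sum of two self-adjoint squares)\<close> is
  positive but has spectrum in \<open>{0, -2}\<close>, so it vanishes and \<open>e = 0\<close>.

  The spectral theory used (non-empty spectrum, \<open>\<parallel>h\<parallel> \<le> r(h)\<close> for self-adjoint \<open>h\<close>) is derived from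
  Cauchy's integral formula for \<open>x^n\<close> over circles, proved by differentiating along radii.\<close>

section \<open>Scalars and the involution\<close>

definition of_complex :: "complex \<Rightarrow> 'a::unital_cstar_algebra" where
  "of_complex z = scaleC z 1"

lemma scaleC_zero_left: "scaleC 0 (x::'a::unital_cstar_algebra) = 0"
  using scaleC_add_left[of 0 0 x] by simp

lemma of_complex_commute: "of_complex z * (x::'a::unital_cstar_algebra) = x * of_complex z"
  by (simp add: of_complex_def mult_scaleC_left mult_scaleC_right)

lemma of_complex_mult: "of_complex (z * w) = (of_complex z * of_complex w :: 'a::unital_cstar_algebra)"
  by (simp add: of_complex_def mult_scaleC_left scaleC_scaleC)

lemma of_complex_add: "of_complex (z + w) = (of_complex z + of_complex w :: 'a::unital_cstar_algebra)"
  by (simp add: of_complex_def scaleC_add_left)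

lemma of_complex_0[simp]: "of_complex 0 = (0 :: 'a::unital_cstar_algebra)"
  by (simp add: of_complex_def scaleC_zero_left)

lemma of_complex_1[simp]: "of_complex 1 = (1 :: 'a::unital_cstar_algebra)"
  by (simp add: of_complex_def scaleC_one)

lemma of_complex_uminus: "of_complex (- z) = (- of_complex z :: 'a::unital_cstar_algebra)"
  using of_complex_add[of z "-z", where 'a='a] by (simp add: minus_unique)

lemma of_complex_diff: "of_complex (z - w) = (of_complex z - of_complex w :: 'a::unital_cstar_algebra)"
  using of_complex_add[of z "-w", where 'a='a] by (simp add: of_complex_uminus)

lemma of_complex_of_real: "of_complex (of_real r) = (of_real r :: 'a::unital_cstar_algebra)"
  by (simp add: of_complex_def of_real_def scaleR_scaleC)

lemma of_complex_scaleR: "of_complex (r *\<^sub>R z) = (r *\<^sub>R of_complex z :: 'a::unital_cstar_algebra)"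
  by (simp add: scaleR_conv_of_real of_complex_mult of_complex_of_real)

lemma norm_of_complex[simp]: "norm (of_complex z :: 'a::unital_cstar_algebra) = cmod z"
  by (simp add: of_complex_def norm_scaleC)

lemma of_complex_power: "of_complex (z ^ n) = (of_complex z ^ n :: 'a::unital_cstar_algebra)"
  by (induction n) (simp_all add: of_complex_mult)

lemma bounded_linear_of_complex: "bounded_linear (of_complex :: complex \<Rightarrow> 'a::unital_cstar_algebra)"
  by (rule bounded_linear_intro[where K=1]) (auto simp: of_complex_add of_complex_scaleR)

lemma cstar_1[simp]: "cstar (1::'a::unital_cstar_algebra) = 1"
  by (metis cstar_cstar cstar_mult mult.left_neutral mult.right_neutral)

lemma cstar_of_complex: "cstar (of_complex z) = (of_complex (cnj z) :: 'a::unital_cstar_algebra)"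
  by (simp add: of_complex_def cstar_scaleC)

lemma cstar_0[simp]: "cstar (0::'a::unital_cstar_algebra) = 0"
  by (metis add_cancel_right_right cstar_add)

lemma cstar_uminus: "cstar (- x) = - cstar (x::'a::unital_cstar_algebra)"
  by (metis add_eq_0_iff cstar_0 cstar_add)

lemma cstar_diff: "cstar (x - y) = cstar x - cstar (y::'a::unital_cstar_algebra)"
  by (metis cstar_add cstar_uminus diff_conv_add_uminus)

lemma cstar_power: "cstar (x ^ n) = cstar (x::'a::unital_cstar_algebra) ^ n"
  by (induction n) (simp_all add: cstar_mult power_commutes)

lemma cstar_scaleR: "cstar (r *\<^sub>R x) = r *\<^sub>R cstar (x::'a::unital_cstar_algebra)"
  by (simp add: scaleR_scaleC cstar_scaleC)

lemma cstar_of_real[simp]: "cstar (of_real t :: 'a::unital_cstar_algebra) = of_real t"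
  by (metis cstar_of_complex of_complex_of_real complex_cnj_complex_of_real)

lemma norm_cstar_le: "norm (cstar (x::'a::unital_cstar_algebra)) \<le> norm x"
proof (cases "cstar x = 0")
  case False
  have "norm (cstar x) ^ 2 \<le> norm x * norm (cstar x)"
    using cstar_identity[of "cstar x"] norm_mult_ineq[of x "cstar x"] by (simp add: cstar_cstar)
  with False show ?thesis by (simp add: power2_eq_square)
qed simp

lemma norm_cstar[simp]: "norm (cstar (x::'a::unital_cstar_algebra)) = norm x"
  by (metis antisym cstar_cstar norm_cstar_le)

lemma norm_power_2_power_selfadjoint:
  fixes h :: "'a::unital_cstar_algebra"
  assumes "cstar h = h"
  shows "norm (h ^ (2 ^ j)) = norm h ^ (2 ^ j)"
proof (induction j)
  case (Suc j)
  have "cstar (h ^ (2 ^ j)) = h ^ (2 ^ j)" using assms by (simp add: cstar_power)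
  then have "norm (h ^ (2 ^ j) * h ^ (2 ^ j)) = norm (h ^ (2 ^ j)) ^ 2"
    using cstar_identity[of "h ^ (2 ^ j)"] by simp
  then show ?case using Suc by (simp add: power_add[symmetric] mult_2 power_mult[symmetric] mult.commute)
qed simp

section \<open>Invertible elements\<close>

definition alg_inverse :: "'a::unital_cstar_algebra \<Rightarrow> 'a" where
  "alg_inverse x = (THE y. x * y = 1 \<and> y * x = 1)"

lemma left_inverse_eq_right_inverse: "x * y = 1 \<Longrightarrow> z * x = 1 \<Longrightarrow> z = (y::'a::unital_cstar_algebra)"
  by (metis mult.assoc mult.left_neutral mult.right_neutral)

lemma alg_inverse_eq: "x * y = 1 \<Longrightarrow> y * x = 1 \<Longrightarrow> alg_inverse x = (y::'a::unital_cstar_algebra)"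
  unfolding alg_inverse_def by (rule the_equality) (auto intro: left_inverse_eq_right_inverse)

lemma alg_inverse:
  "alg_invertible x \<Longrightarrow> x * alg_inverse x = 1 \<and> alg_inverse x * (x::'a::unital_cstar_algebra) = 1"
  unfolding alg_invertible_def using alg_inverse_eq by metis

lemma alg_invertibleI: "x * y = 1 \<Longrightarrow> z * x = 1 \<Longrightarrow> alg_invertible (x::'a::unital_cstar_algebra)"
  unfolding alg_invertible_def using left_inverse_eq_right_inverse by metis

lemma alg_invertible_mult:
  "alg_invertible x \<Longrightarrow> alg_invertible y \<Longrightarrow> alg_invertible (x * (y::'a::unital_cstar_algebra))"
  by (rule alg_invertibleI[of _ "alg_inverse y * alg_inverse x" "alg_inverse y * alg_inverse x"])
    (metis alg_inverse mult.assoc mult.right_neutral)+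

lemma alg_inverse_mult: "alg_invertible x \<Longrightarrow> alg_invertible y \<Longrightarrow>
    alg_inverse (x * y) = alg_inverse y * alg_inverse (x::'a::unital_cstar_algebra)"
  by (rule alg_inverse_eq) (metis alg_inverse mult.assoc mult.right_neutral)+

lemma alg_invertible_uminus: "alg_invertible (- x) \<longleftrightarrow> alg_invertible (x::'a::unital_cstar_algebra)"
  unfolding alg_invertible_def by (metis minus_minus mult_minus_left mult_minus_right)

lemma alg_invertible_minus_commute:
  "alg_invertible (x - y) \<longleftrightarrow> alg_invertible (y - (x::'a::unital_cstar_algebra))"
  by (metis alg_invertible_uminus minus_diff_eq)

lemma alg_invertible_of_complex: "z \<noteq> 0 \<Longrightarrow> alg_invertible (of_complex z :: 'a::unital_cstar_algebra)"
  unfolding alg_invertible_def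
  by (rule exI[of _ "of_complex (inverse z)"]) (simp add: of_complex_mult[symmetric])

lemma alg_inverse_of_complex:
  "z \<noteq> 0 \<Longrightarrow> alg_inverse (of_complex z) = (of_complex (inverse z) :: 'a::unital_cstar_algebra)"
  by (rule alg_inverse_eq) (simp_all add: of_complex_mult[symmetric])

lemma alg_inverse_nonzero: "alg_invertible x \<Longrightarrow> alg_inverse x \<noteq> (0::'a::unital_cstar_algebra)"
  using alg_inverse by fastforce

lemma alg_invertible_commuting_factor:
  assumes "x * y = y * x" "alg_invertible (x * (y::'a::unital_cstar_algebra))"
  shows "alg_invertible x"
proof -
  let ?w = "alg_inverse (x * y)"
  have "x * (y * ?w) = 1" using alg_inverse[OF assms(2)] by (simp add: mult.assoc)
  moreover have "(?w * y) * x = 1" using alg_inverse[OF assms(2)] assms(1) by (simp add: mult.assoc)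
  ultimately show ?thesis by (rule alg_invertibleI)
qed

lemma alg_invertible_one_minus:
  fixes y :: "'a::unital_cstar_algebra"
  assumes "norm y < 1"
  shows "alg_invertible (1 - y)" "norm (alg_inverse (1 - y)) \<le> 1 / (1 - norm y)"
proof -
  have norms: "summable (\<lambda>n. norm (y ^ n))"
    using assms by (intro summable_comparison_test'[OF summable_geometric[of "norm y"], of 0])
      (simp_all add: norm_power_ineq)
  then have sums: "summable (\<lambda>n. y ^ n)" by (rule summable_norm_cancel)
  define s where "s = (\<Sum>n. y ^ n)"
  \<comment> \<open>splitting off the first term of the Neumann series gives \<open>s = 1 + y s = 1 + s y\<close>\<close>
  have "(\<Sum>n. y ^ Suc n) = s - 1"
    unfolding s_def by (simp only: suminf_split_head[OF sums] power_0)
  moreover have "(\<Sum>n. y ^ Suc n) = y * s" "(\<Sum>n. y ^ Suc n) = s * y"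
    unfolding s_def using suminf_mult[OF sums, of y] suminf_mult2[OF sums, of y]
    by (simp_all add: power_commutes)
  ultimately have "(1 - y) * s = 1" "s * (1 - y) = 1" by (simp_all add: algebra_simps)
  then show "alg_invertible (1 - y)" by (rule alg_invertibleI)
  have inv: "alg_inverse (1 - y) = s" using \<open>(1 - y) * s = 1\<close> \<open>s * (1 - y) = 1\<close> by (rule alg_inverse_eq)
  have "norm s \<le> (\<Sum>n. norm (y ^ n))" unfolding s_def using norms by (rule summable_norm)
  also have "\<dots> \<le> (\<Sum>n. norm y ^ n)"
    using assms by (intro suminf_le norms summable_geometric) (simp_all add: norm_power_ineq)
  also have "\<dots> = 1 / (1 - norm y)" using assms by (simp add: suminf_geometric)
  finally show "norm (alg_inverse (1 - y)) \<le> 1 / (1 - norm y)" using inv by simp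
qed

lemma alg_invertible_add_small:
  fixes x h :: "'a::unital_cstar_algebra"
  assumes "alg_invertible x" "norm (alg_inverse x) * norm h < 1"
  shows "alg_invertible (x + h)"
    "norm (alg_inverse (x + h)) \<le> norm (alg_inverse x) / (1 - norm (alg_inverse x) * norm h)"
proof -
  let ?y = "- (alg_inverse x * h)"
  have y_le: "norm ?y \<le> norm (alg_inverse x) * norm h" by (simp add: norm_mult_ineq)
  then have y: "norm ?y < 1" using assms(2) by simp
  have eq: "x + h = x * (1 - ?y)"
    using alg_inverse[OF assms(1)] by (simp add: algebra_simps mult.assoc[symmetric])
  show inv: "alg_invertible (x + h)"
    unfolding eq by (rule alg_invertible_mult[OF assms(1) alg_invertible_one_minus(1)[OF y]])
  have "norm (alg_inverse (x + h)) \<le> norm (alg_inverse (1 - ?y)) * norm (alg_inverse x)"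
    unfolding eq alg_inverse_mult[OF assms(1) alg_invertible_one_minus(1)[OF y]] by (rule norm_mult_ineq)
  also have "\<dots> \<le> 1 / (1 - norm ?y) * norm (alg_inverse x)"
    by (rule mult_right_mono[OF alg_invertible_one_minus(2)[OF y]]) simp
  also have "\<dots> \<le> 1 / (1 - norm (alg_inverse x) * norm h) * norm (alg_inverse x)"
    using assms(2) y_le by (intro mult_right_mono divide_left_mono) auto
  finally show "norm (alg_inverse (x + h)) \<le> norm (alg_inverse x) / (1 - norm (alg_inverse x) * norm h)"
    by simp
qed

lemma alg_invertible_near:
  fixes x y :: "'a::unital_cstar_algebra"
  assumes "alg_invertible x" "norm (alg_inverse x) * norm (y - x) \<le> 1 / 2"
  shows "alg_invertible y" "norm (alg_inverse y) \<le> 2 * norm (alg_inverse x)"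
proof -
  have small: "norm (alg_inverse x) * norm (y - x) < 1" using assms(2) by simp
  show "alg_invertible y" using alg_invertible_add_small(1)[OF assms(1) small] by simp
  have "norm (alg_inverse x) / (1 - norm (alg_inverse x) * norm (y - x)) \<le> 2 * norm (alg_inverse x)"
    using assms(2) mult_left_mono[OF assms(2) norm_ge_zero[of "alg_inverse x"]] by (simp add: field_simps)
  then show "norm (alg_inverse y) \<le> 2 * norm (alg_inverse x)"
    using alg_invertible_add_small(2)[OF assms(1) small] by simp
qed

lemma alg_inverse_second_order_remainder:
  fixes x y :: "'a::unital_cstar_algebra"
  assumes "alg_invertible x" "alg_invertible y"
  shows "alg_inverse y - alg_inverse x + alg_inverse x * (y - x) * alg_inverse x
       = alg_inverse y * (y - x) * alg_inverse x * (y - x) * alg_inverse x"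
proof -
  have first_order: "alg_inverse x - alg_inverse y = alg_inverse y * (y - x) * alg_inverse x"
    using alg_inverse[OF assms(1)] alg_inverse[OF assms(2)]
    by (simp add: algebra_simps mult.assoc)
  have "alg_inverse y - alg_inverse x + alg_inverse x * (y - x) * alg_inverse x
      = (alg_inverse x - alg_inverse y) * (y - x) * alg_inverse x"
    using first_order by (simp add: algebra_simps)
  then show ?thesis by (simp only: first_order)
qed

lemma alg_inverse_has_derivative:
  fixes x :: "'a::unital_cstar_algebra"
  assumes x: "alg_invertible x"
  shows "(alg_inverse has_derivative (\<lambda>h. - (alg_inverse x * h * alg_inverse x))) (at x)"
proof -
  let ?N = "norm (alg_inverse x)"
  let ?R = "\<lambda>y. alg_inverse y - alg_inverse x - - (alg_inverse x * (y - x) * alg_inverse x)"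
  have pos: "?N > 0" using alg_inverse_nonzero[OF x] by simp
  have "bounded_linear (\<lambda>h. alg_inverse x * h * alg_inverse x)"
    using bounded_linear_compose[OF bounded_linear_mult_left[of "alg_inverse x"]
        bounded_linear_mult_right[of "alg_inverse x"]] by (simp add: o_def)
  then have linear: "bounded_linear (\<lambda>h. - (alg_inverse x * h * alg_inverse x))"
    by (rule bounded_linear_minus)
  have "norm (?R y) / norm (y - x) \<le> 2 * ?N ^ 3 * norm (y - x)" if "dist y x < 1 / (2 * ?N)" for y
  proof -
    have "?N * norm (y - x) \<le> 1 / 2" using that pos by (simp add: dist_norm field_simps)
    note near = alg_invertible_near[OF x this]
    have "norm (?R y) \<le> norm (alg_inverse y) * norm (y - x) * ?N * norm (y - x) * ?N"
      unfolding diff_minus_eq_add alg_inverse_second_order_remainder[OF x near(1)]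
      by (intro order_trans[OF norm_mult_ineq] mult_mono mult_nonneg_nonneg)
        (auto intro: order_trans[OF norm_mult_ineq] mult_mono)
    also have "\<dots> \<le> (2 * ?N) * norm (y - x) * ?N * norm (y - x) * ?N"
      by (intro mult_right_mono near(2)) auto
    finally show ?thesis by (cases "y = x") (simp_all add: divide_le_eq power3_eq_cube algebra_simps)
  qed
  moreover have "\<forall>\<^sub>F y in at x. dist y x < 1 / (2 * ?N)"
    unfolding eventually_at using pos by (intro exI[of _ "1 / (2 * ?N)"]) auto
  ultimately have "\<forall>\<^sub>F y in at x. norm (norm (?R y) / norm (y - x)) \<le> 2 * ?N ^ 3 * norm (y - x)"
    by (auto elim: eventually_mono)
  moreover have "((\<lambda>y. 2 * ?N ^ 3 * norm (y - x)) \<longlongrightarrow> 0) (at x)"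
    by (auto intro!: tendsto_eq_intros)
  ultimately have "((\<lambda>y. norm (?R y) / norm (y - x)) \<longlongrightarrow> 0) (at x)"
    by (rule Lim_null_comparison)
  with linear show ?thesis unfolding has_derivative_iff_norm by blast
qed

lemma continuous_on_alg_inverse: "continuous_on {x::'a::unital_cstar_algebra. alg_invertible x} alg_inverse"
  by (metis alg_inverse_has_derivative has_derivative_continuous continuous_at_imp_continuous_on mem_Collect_eq)

lemma has_vector_derivative_alg_inverse:
  fixes \<phi> :: "real \<Rightarrow> 'a::unital_cstar_algebra"
  assumes "(\<phi> has_vector_derivative \<phi>') (at t within S)" "alg_invertible (\<phi> t)"
  shows "((\<lambda>s. alg_inverse (\<phi> s)) has_vector_derivative
           - (alg_inverse (\<phi> t) * \<phi>' * alg_inverse (\<phi> t))) (at t within S)"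
  using vector_derivative_diff_chain_within[OF assms(1)
      has_derivative_at_withinI[OF alg_inverse_has_derivative[OF assms(2)]]]
  by (simp add: o_def)

section \<open>The spectrum\<close>

lemma mem_alg_spectrum_iff:
  "z \<in> alg_spectrum x \<longleftrightarrow> \<not> alg_invertible (x - of_complex z :: 'a::unital_cstar_algebra)"
  by (simp add: alg_spectrum_def of_complex_def)

lemma alg_invertible_of_complex_minus:
  fixes x :: "'a::unital_cstar_algebra"
  assumes "norm x < cmod z"
  shows "alg_invertible (of_complex z - x)" "norm (alg_inverse (of_complex z - x)) \<le> 1 / (cmod z - norm x)"
proof -
  have z: "z \<noteq> 0" "cmod z > 0" using assms norm_ge_zero[of x] by auto
  let ?y = "of_complex (inverse z) * x"
  have y_le: "norm ?y \<le> norm x / cmod z"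
    using norm_mult_ineq[of "of_complex (inverse z)" x] by (simp add: norm_inverse divide_inverse mult.commute)
  moreover have "norm x / cmod z < 1" using assms z by simp
  ultimately have y: "norm ?y < 1" by linarith
  have eq: "of_complex z - x = of_complex z * (1 - ?y)"
    by (simp add: right_diff_distrib mult.assoc[symmetric] of_complex_mult[symmetric] z)
  note inv = alg_invertible_of_complex[OF z(1)] alg_invertible_one_minus[OF y]
  show "alg_invertible (of_complex z - x)" unfolding eq by (rule alg_invertible_mult[OF inv(1,2)])
  have "norm (alg_inverse (of_complex z - x)) \<le> norm (alg_inverse (1 - ?y)) * (1 / cmod z)"
    unfolding eq alg_inverse_mult[OF inv(1,2)] alg_inverse_of_complex[OF z(1)]
    using norm_mult_ineq[of "alg_inverse (1 - ?y)" "of_complex (inverse z)"]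
    by (simp add: norm_inverse divide_inverse)
  also have "\<dots> \<le> 1 / (1 - norm ?y) * (1 / cmod z)" by (rule mult_right_mono[OF inv(3)]) simp
  also have "\<dots> \<le> 1 / (1 - norm x / cmod z) * (1 / cmod z)"
  proof -
    have "0 < 1 - norm x / cmod z" using assms z by (simp add: field_simps)
    then show ?thesis using y y_le by (intro mult_right_mono divide_left_mono) (auto intro!: mult_pos_pos)
  qed
  also have "\<dots> = 1 / (cmod z - norm x)" using z by (simp add: field_simps)
  finally show "norm (alg_inverse (of_complex z - x)) \<le> 1 / (cmod z - norm x)" .
qed

lemma cmod_le_norm_of_mem_alg_spectrum:
  "z \<in> alg_spectrum x \<Longrightarrow> cmod z \<le> norm (x::'a::unital_cstar_algebra)"
  using alg_invertible_of_complex_minus(1)[of x z] alg_invertible_minus_commute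
  by (force simp: mem_alg_spectrum_iff)

lemma alg_invertible_of_mult_eq_of_complex:
  fixes m n :: "'a::unital_cstar_algebra"
  assumes "m * n = of_complex k" "n * m = of_complex k" "k \<noteq> 0"
  shows "alg_invertible m"
proof (rule alg_invertibleI)
  show "m * (n * of_complex (inverse k)) = 1"
    by (simp add: mult.assoc[symmetric] assms(1,3) of_complex_mult[symmetric])
  show "(of_complex (inverse k) * n) * m = 1"
    by (simp add: mult.assoc assms(2,3) of_complex_mult[symmetric])
qed

lemma power_diff_power_commuting_factor:
  fixes x u :: "'a::unital_cstar_algebra"
  assumes "\<And>w. u * w = w * u"
  shows "\<exists>q. x ^ n - u ^ n = (x - u) * q \<and> x * q = q * x"
proof (induction n)
  case (Suc n)
  then obtain q where q: "x ^ n - u ^ n = (x - u) * q" "q * x = x * q" by metis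
  have un: "u ^ n * w = w * u ^ n" for w
    by (induction n) (simp_all add: assms mult.assoc, metis assms mult.assoc)
  have xu: "x * (x - u) = (x - u) * x" using assms[of x] by (simp add: algebra_simps)
  have "x ^ Suc n - u ^ Suc n = x * (x ^ n - u ^ n) + (x - u) * u ^ n"
    by (simp add: algebra_simps)
  also have "\<dots> = (x - u) * (x * q + u ^ n)"
    unfolding q(1) by (simp add: distrib_left mult.assoc[symmetric] xu)
  finally have "x ^ Suc n - u ^ Suc n = (x - u) * (x * q + u ^ n)" .
  moreover have "x * (x * q + u ^ n) = (x * q + u ^ n) * x"
    by (simp add: distrib_left distrib_right mult.assoc q(2) un)
  ultimately show ?case by blast
qed (intro exI[of _ 0], simp)

lemma power_mem_alg_spectrum:
  fixes x :: "'a::unital_cstar_algebra"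
  assumes "z \<in> alg_spectrum x"
  shows "z ^ n \<in> alg_spectrum (x ^ n)"
proof -
  obtain q where q: "x ^ n - of_complex z ^ n = (x - of_complex z) * q" "x * q = q * x"
    using power_diff_power_commuting_factor[of "of_complex z" x n] of_complex_commute by blast
  have "(x - of_complex z) * q = q * (x - of_complex z)"
    by (simp add: algebra_simps q(2) of_complex_commute[of z q])
  then show ?thesis
    using assms alg_invertible_commuting_factor unfolding mem_alg_spectrum_iff of_complex_power q(1) by blast
qed

lemma alg_spectrum_inverse:
  fixes x y :: "'a::unital_cstar_algebra"
  assumes xy: "x * y = 1" and yx: "y * x = 1" and z: "z \<in> alg_spectrum x"
  shows "z \<noteq> 0" "inverse z \<in> alg_spectrum y"
proof -
  show z0: "z \<noteq> 0" using z alg_invertibleI[OF xy yx] by (auto simp: mem_alg_spectrum_iff)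
  have "of_complex z * x * y = of_complex z"
    by (simp only: mult.assoc xy mult_1_right)
  moreover have "of_complex z * x * of_complex (inverse z) = x"
    using z0 by (simp add: of_complex_commute[of z x] mult.assoc of_complex_mult[symmetric])
  ultimately have "x - of_complex z = - (of_complex z * x * (y - of_complex (inverse z)))"
    by (simp add: right_diff_distrib)
  then show "inverse z \<in> alg_spectrum y"
    using z z0 alg_invertibleI[OF xy yx]
    by (auto simp: mem_alg_spectrum_iff alg_invertible_uminus
        intro: alg_invertible_mult alg_invertible_of_complex)
qed

lemma alg_spectrum_mult_commute:
  fixes y w :: "'a::unital_cstar_algebra"
  assumes "z \<in> alg_spectrum (y * w)" "z \<noteq> 0"
  shows "z \<in> alg_spectrum (w * y)"
proof (rule ccontr)
  assume "z \<notin> alg_spectrum (w * y)"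
  then have inv: "alg_invertible (w * y - of_complex z)" by (simp add: mem_alg_spectrum_iff)
  define v where "v = alg_inverse (w * y - of_complex z)"
  have v: "(w * y - of_complex z) * v = 1" "v * (w * y - of_complex z) = 1"
    using alg_inverse[OF inv] by (auto simp: v_def)
  \<comment> \<open>the classical inverse of \<open>y w - z\<close> is \<open>(y v w - 1) / z\<close>\<close>
  have "(y * w - of_complex z) * (y * v * w - 1) = y * ((w * y - of_complex z) * v) * w - y * w + of_complex z"
    using mult.assoc[of "of_complex z" y] of_complex_commute[of z y]
    by (simp add: algebra_simps)
  moreover have "(y * v * w - 1) * (y * w - of_complex z) = y * (v * (w * y - of_complex z)) * w - y * w + of_complex z"
    by (simp add: algebra_simps of_complex_commute[of _ w, symmetric])
  ultimately have "alg_invertible (y * w - of_complex z)"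
    using v assms(2) by (intro alg_invertible_of_mult_eq_of_complex[where k = z]) simp_all
  then show False using assms(1) by (simp add: mem_alg_spectrum_iff)
qed

lemma alg_spectrum_quadratic:
  fixes f :: "'a::unital_cstar_algebra"
  assumes ff: "f * f = of_complex c * f" and z: "z \<in> alg_spectrum f"
  shows "z = 0 \<or> z = c"
proof (rule ccontr)
  assume "\<not> (z = 0 \<or> z = c)"
  then have k: "z * (c - z) \<noteq> 0" by auto
  have "(f - of_complex z) * (f + of_complex z - of_complex c) = of_complex (z * (c - z))"
       "(f + of_complex z - of_complex c) * (f - of_complex z) = of_complex (z * (c - z))"
    by (simp_all add: algebra_simps ff of_complex_commute[of _ f, symmetric] of_complex_mult[symmetric]
        of_complex_diff[symmetric] of_complex_add[symmetric] mult.commute)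
  then have "alg_invertible (f - of_complex z)"
    using k by (rule alg_invertible_of_mult_eq_of_complex)
  then show False using z by (simp add: mem_alg_spectrum_iff)
qed

lemma alg_spectrum_square:
  fixes x :: "'a::unital_cstar_algebra"
  assumes "z \<in> alg_spectrum (x * x)"
  obtains v where "v \<in> alg_spectrum x" "z = v * v"
proof -
  let ?v = "csqrt z"
  have vv: "?v * ?v = z" using power2_csqrt[of z] by (simp add: power2_eq_square)
  have "x * x - of_complex z = (x - of_complex ?v) * (x - of_complex (- ?v))"
    by (simp add: algebra_simps of_complex_uminus of_complex_commute[of _ x, symmetric]
        of_complex_mult[symmetric] vv)
  moreover have "\<not> alg_invertible (x * x - of_complex z)"
    using assms by (simp add: mem_alg_spectrum_iff)
  ultimately have "\<not> alg_invertible (x - of_complex ?v) \<or> \<not> alg_invertible (x - of_complex (- ?v))"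
    using alg_invertible_mult by metis
  then show ?thesis using that vv by (auto simp: mem_alg_spectrum_iff)
qed

lemma bdd_above_cmod_alg_spectrum: "bdd_above (cmod ` alg_spectrum (x::'a::unital_cstar_algebra))"
  using cmod_le_norm_of_mem_alg_spectrum by (intro bdd_aboveI[of _ "norm x"]) auto

lemma cmod_le_spectral_radius: "z \<in> alg_spectrum x \<Longrightarrow> cmod z \<le> spectral_radius (x::'a::unital_cstar_algebra)"
  unfolding spectral_radius_def using bdd_above_cmod_alg_spectrum by (intro cSup_upper) auto

lemma norm_selfadjoint_add_imaginary:
  fixes h :: "'a::unital_cstar_algebra"
  assumes "cstar h = h"
  shows "norm (h + of_complex (\<i> * of_real r)) ^ 2 \<le> norm h ^ 2 + r ^ 2"
proof -
  let ?k = "h + of_complex (\<i> * of_real r)"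
  have "cstar ?k = h - of_complex (\<i> * of_real r)"
    using assms by (simp add: cstar_add cstar_of_complex of_complex_uminus)
  moreover have "(h - of_complex (\<i> * of_real r)) * ?k = h * h + of_complex (of_real (r ^ 2))"
    by (simp add: algebra_simps of_complex_commute[of _ h, symmetric] of_complex_mult[symmetric]
        of_complex_diff[symmetric] of_complex_add[symmetric] power2_eq_square)
  ultimately have "norm ?k ^ 2 = norm (h * h + of_complex (of_real (r ^ 2)))"
    using cstar_identity[of ?k] by simp
  also have "\<dots> \<le> norm (h * h) + r ^ 2"
    using norm_triangle_ineq[of "h * h" "of_complex (of_real (r ^ 2))"] by (simp add: norm_power)
  also have "\<dots> \<le> norm h ^ 2 + r ^ 2"
    using norm_mult_ineq[of h h] by (simp add: power2_eq_square)
  finally show ?thesis .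
qed

lemma alg_spectrum_selfadjoint_real:
  fixes h :: "'a::unital_cstar_algebra"
  assumes h: "cstar h = h" and z: "z \<in> alg_spectrum h"
  shows "Im z = 0"
proof (rule ccontr)
  assume "Im z \<noteq> 0"
  \<comment> \<open>shifting by \<open>\<i> r\<close> moves \<open>z\<close> away from the real axis faster than it increases the norm\<close>
  define r where "r = (norm h ^ 2 + 1) / (2 * Im z)"
  let ?i = "of_complex (\<i> * of_real r) :: 'a"
  have "z + \<i> * of_real r \<in> alg_spectrum (h + ?i)"
    using z by (simp add: mem_alg_spectrum_iff of_complex_add algebra_simps)
  then have "cmod (z + \<i> * of_real r) ^ 2 \<le> norm (h + ?i) ^ 2"
    by (intro power_mono cmod_le_norm_of_mem_alg_spectrum) simp_all
  also have "\<dots> \<le> norm h ^ 2 + r ^ 2" by (rule norm_selfadjoint_add_imaginary[OF h])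
  finally have "cmod z ^ 2 + 2 * r * Im z \<le> norm h ^ 2"
    unfolding cmod_power2 by (simp add: power2_eq_square algebra_simps)
  moreover have "2 * r * Im z = norm h ^ 2 + 1" unfolding r_def using \<open>Im z \<noteq> 0\<close> by simp
  ultimately show False by (smt (verit) zero_le_power2)
qed

section \<open>Resolvent integrals over circles\<close>

lemma continuous_on_of_complex[continuous_intros]:
  "continuous_on S f \<Longrightarrow> continuous_on S (\<lambda>t. of_complex (f t) :: 'a::unital_cstar_algebra)"
  by (rule bounded_linear.continuous_on[OF bounded_linear_of_complex])

lemma scaleR_of_complex_cis:
  "R *\<^sub>R of_complex (cis t) = (of_complex (complex_of_real R * cis t) :: 'a::unital_cstar_algebra)"
  by (metis of_complex_scaleR scaleR_conv_of_real)

lemma has_vector_derivative_of_complex_cis: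
  "((\<lambda>t. of_complex (cis t) :: 'a::unital_cstar_algebra) has_vector_derivative of_complex (\<i> * cis t))
     (at t within S)"
  using has_derivative_cis[OF has_derivative_ident, of t S]
  by (intro bounded_linear.has_vector_derivative[OF bounded_linear_of_complex])
    (simp add: has_vector_derivative_def)

definition circle_resolvent :: "'a::unital_cstar_algebra \<Rightarrow> real \<Rightarrow> real \<Rightarrow> 'a" where
  "circle_resolvent x R t = alg_inverse (R *\<^sub>R of_complex (cis t) - x)"

lemma norm_circle_resolvent_integral_le:
  fixes x :: "'a::unital_cstar_algebra"
  assumes "norm x < R"
  shows "norm (integral (cbox 0 (2*pi)) (circle_resolvent x R)) \<le> 2 * pi / (R - norm x)"
proof -
  have "0 < R" using assms norm_ge_zero[of x] by linarith
  then have R: "norm x < cmod (of_real R * cis t)" "\<bar>R\<bar> = R" for t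
    using assms by (simp_all add: norm_mult)
  have bound: "norm (circle_resolvent x R t) \<le> 1 / (R - norm x)" for t
    using alg_invertible_of_complex_minus(2)[OF R(1)] R(2)
    by (simp add: circle_resolvent_def scaleR_of_complex_cis norm_mult)
  have cont: "continuous_on (cbox 0 (2*pi)) (circle_resolvent x R)"
    unfolding circle_resolvent_def scaleR_of_complex_cis
    using alg_invertible_of_complex_minus(1)[OF R(1)]
    by (intro continuous_on_compose2[OF continuous_on_alg_inverse]) (auto intro!: continuous_intros)
  have "0 \<le> 1 / (R - norm x)" using assms by simp
  from has_integral_bound[OF this integrable_integral[OF integrable_continuous[OF cont]]] bound
  have "norm (integral (cbox 0 (2*pi)) (circle_resolvent x R)) \<le> 1 / (R - norm x) * (2 * pi)"
    by simp
  then show ?thesis by simp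
qed

lemma integral_left_mult:
  fixes c :: "'a::real_normed_algebra"
  assumes "f integrable_on S"
  shows "integral S (\<lambda>t. c * f t) = c * integral S f"
  by (rule integral_unique[OF has_integral_mult_right[OF integrable_integral[OF assms]]])

lemma integral_circle_power_eq_0:
  assumes "n \<ge> 1"
  shows "integral (cbox 0 (2*pi)) (\<lambda>t. (R *\<^sub>R of_complex (cis t)) ^ n) = (0::'a::unital_cstar_algebra)"
proof -
  have power: "(R *\<^sub>R of_complex (cis t)) ^ n = (R ^ n) *\<^sub>R (of_complex (cis (real n * t)) :: 'a)" for t
    by (simp only: scaleR_power of_complex_power[symmetric] Complex.DeMoivre)
  define V where "V t = of_complex (- \<i> / of_nat n) * ((R ^ n) *\<^sub>R (of_complex (cis (real n * t)) :: 'a))" for t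
  have "(V has_vector_derivative (R *\<^sub>R of_complex (cis t)) ^ n) (at t within {0..2*pi})" for t
  proof -
    have "((\<lambda>t. cis (real n * t)) has_vector_derivative (of_real (real n) * (\<i> * cis (real n * t))))
        (at t within {0..2*pi})"
      using has_derivative_cis[OF has_derivative_mult_right[OF has_derivative_ident, of "real n"], of t "{0..2*pi}"]
      by (simp add: has_vector_derivative_def scaleR_conv_of_real ac_simps)
    then have "(V has_vector_derivative of_complex (- \<i> / of_nat n) *
        ((R ^ n) *\<^sub>R of_complex (of_real (real n) * (\<i> * cis (real n * t))))) (at t within {0..2*pi})"
      unfolding V_def
      by (intro has_vector_derivative_mult_right bounded_linear.has_vector_derivative[OF bounded_linear_scaleR_right]
          bounded_linear.has_vector_derivative[OF bounded_linear_of_complex])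
    moreover have "- \<i> / of_nat n * (of_real (real n) * (\<i> * cis (real n * t))) = cis (real n * t)"
      using assms by (simp add: field_simps)
    ultimately show ?thesis
      by (simp only: power mult_scaleR_right of_complex_mult[symmetric])
  qed
  then have "((\<lambda>t. (R *\<^sub>R of_complex (cis t)) ^ n) has_integral (V (2*pi) - V 0)) {0..2*pi}"
    by (intro fundamental_theorem_of_calculus) auto
  moreover have "cis (real n * (2 * pi)) = 1"
    using cis_multiple_2pi[of "real n"] by (simp add: mult.commute)
  then have "V (2*pi) = V 0" by (simp add: V_def)
  ultimately show ?thesis by (metis box_real(2) diff_self integral_unique)
qed

context
  fixes x :: "'a::unital_cstar_algebra" and r0 :: real
  assumes r0: "0 \<le> r0"
    and invertible_outside: "\<And>z. r0 \<le> cmod z \<Longrightarrow> alg_invertible (of_complex z - x)"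
begin

lemma alg_invertible_circle: "r0 \<le> R \<Longrightarrow> alg_invertible (R *\<^sub>R of_complex (cis t) - x)"
  using invertible_outside[of "of_real R * cis t"] r0 by (simp add: scaleR_of_complex_cis norm_mult)

lemma continuous_on_circle_resolvent:
  "continuous_on ({r0..} \<times> S) (\<lambda>p. circle_resolvent x (fst p) (snd p))"
  unfolding circle_resolvent_def
  by (intro continuous_on_compose2[OF continuous_on_alg_inverse]) (auto intro!: continuous_intros alg_invertible_circle)

lemma continuous_on_circle_resolvent_angle: "r0 \<le> R \<Longrightarrow> continuous_on S (circle_resolvent x R)"
  unfolding circle_resolvent_def
  by (intro continuous_on_compose2[OF continuous_on_alg_inverse]) (auto intro!: continuous_intros alg_invertible_circle)

lemma circle_resolvent_radial_derivative:
  assumes "r0 \<le> R"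
  shows "((\<lambda>R. circle_resolvent x R t) has_vector_derivative
           - (circle_resolvent x R t * of_complex (cis t) * circle_resolvent x R t)) (at R within S)"
proof -
  have "((\<lambda>R. R *\<^sub>R of_complex (cis t) - x) has_vector_derivative of_complex (cis t)) (at R within S)"
    by (auto intro!: derivative_eq_intros)
  from has_vector_derivative_alg_inverse[OF this alg_invertible_circle[OF assms]]
  show ?thesis by (simp add: circle_resolvent_def)
qed

lemma circle_resolvent_angular_derivative:
  assumes "r0 \<le> R"
  shows "(circle_resolvent x R has_vector_derivative
           - (R *\<^sub>R of_complex \<i> * (circle_resolvent x R t * of_complex (cis t) * circle_resolvent x R t)))
         (at t within S)"
proof -
  have "((\<lambda>t. R *\<^sub>R of_complex (cis t) - x) has_vector_derivative R *\<^sub>R of_complex (\<i> * cis t))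
      (at t within S)"
    by (auto intro!: derivative_eq_intros has_vector_derivative_of_complex_cis)
  from has_vector_derivative_alg_inverse[OF this alg_invertible_circle[OF assms]]
  show ?thesis
    by (simp add: circle_resolvent_def[abs_def] of_complex_mult mult.assoc)
      (metis of_complex_commute mult.assoc)
qed

lemma integral_circle_resolvent_radial_derivative_eq_0:
  assumes "r0 \<le> R" "R \<noteq> 0"
  shows "integral (cbox 0 (2*pi)) (\<lambda>t. circle_resolvent x R t * of_complex (cis t) * circle_resolvent x R t) = 0"
proof -
  let ?g = "\<lambda>t. circle_resolvent x R t * of_complex (cis t) * circle_resolvent x R t"
  \<comment> \<open>the radial derivative is a multiple of the angular one, which has a periodic primitive\<close>
  define H where "H t = (inverse R *\<^sub>R of_complex \<i>) * circle_resolvent x R t" for t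
  have "(H has_vector_derivative ?g t) (at t within {0..2*pi})" for t
  proof -
    have "(H has_vector_derivative (inverse R *\<^sub>R of_complex \<i>) * - (R *\<^sub>R of_complex \<i> * ?g t))
        (at t within {0..2*pi})"
      unfolding H_def by (intro has_vector_derivative_mult_right circle_resolvent_angular_derivative assms(1))
    moreover have "(inverse R *\<^sub>R of_complex \<i>) * - (R *\<^sub>R of_complex \<i> * ?g t) = (?g t :: 'a)"
      using assms(2) by (simp add: mult.assoc[symmetric] of_complex_mult[symmetric] of_complex_uminus)
    ultimately show ?thesis by simp
  qed
  then have "(?g has_integral (H (2*pi) - H 0)) {0..2*pi}"
    by (intro fundamental_theorem_of_calculus) auto
  moreover have "H (2*pi) = H 0" by (simp add: H_def circle_resolvent_def)
  ultimately show ?thesis by (simp add: integral_unique)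
qed

lemma circle_resolvent_integral_has_vector_derivative:
  assumes "r0 \<le> R"
  shows "((\<lambda>R. integral (cbox 0 (2*pi)) (circle_resolvent x R)) has_vector_derivative
           integral (cbox 0 (2*pi)) (\<lambda>t. - (circle_resolvent x R t * of_complex (cis t) * circle_resolvent x R t)))
         (at R within {r0..})"
proof (rule leibniz_rule_vector_derivative)
  show "continuous_on ({r0..} \<times> cbox 0 (2*pi))
      (\<lambda>(R, t). - (circle_resolvent x R t * of_complex (cis t) * circle_resolvent x R t))"
    using continuous_on_circle_resolvent[of "cbox 0 (2*pi)"]
    by (simp add: split_beta) (intro continuous_intros; simp)
qed (use assms in \<open>auto intro: circle_resolvent_radial_derivative integrable_continuous_real
      continuous_on_circle_resolvent_angle\<close>)

lemma circle_resolvent_integral_eq_0: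
  assumes "r0 \<le> R"
  shows "integral (cbox 0 (2*pi)) (circle_resolvent x R) = 0"
proof -
  define J where "J = (\<lambda>R. integral (cbox 0 (2*pi)) (circle_resolvent x R))"
  have J': "(J has_vector_derivative 0) (at R within {r0..})" if "R \<in> {r0..} - {0}" for R
    using circle_resolvent_integral_has_vector_derivative[of R]
      integral_circle_resolvent_radial_derivative_eq_0[of R] that
    by (simp add: J_def)
  have const: "J R = J c" if "r0 \<le> c" for c
  proof (rule has_derivative_zero_unique_strong_convex[of "{r0..}" "{0}" J c "J c" R])
    show "continuous_on {r0..} J"
      unfolding J_def
      by (rule continuous_on_vector_derivative[OF circle_resolvent_integral_has_vector_derivative]) simp
  qed (use that assms J' in \<open>auto simp: has_vector_derivative_def\<close>)
  have "norm (J R) \<le> e" if "e > 0" for e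
  proof -
    define c where "c = max r0 (norm x) + 2 * pi / e"
    have "0 < 2 * pi / e" using that by simp
    then have c: "r0 \<le> c" "2 * pi / e \<le> c - norm x" "norm x < c"
      by (auto simp: c_def)
    have "norm (J R) \<le> 2 * pi / (c - norm x)"
      using const[OF c(1)] norm_circle_resolvent_integral_le[OF c(3)] by (simp add: J_def)
    also have "\<dots> \<le> 2 * pi / (2 * pi / e)"
      using c that by (intro divide_left_mono) auto
    finally show ?thesis using that by simp
  qed
  then show ?thesis unfolding J_def by (metis dense_le norm_le_zero_iff linorder_not_le)
qed

lemma circle_resolvent_moment_Suc:
  assumes "r0 \<le> R"
  shows "integral (cbox 0 (2*pi)) (\<lambda>t. (R *\<^sub>R of_complex (cis t)) ^ Suc m * circle_resolvent x R t)
       = integral (cbox 0 (2*pi)) (\<lambda>t. (R *\<^sub>R of_complex (cis t)) ^ m)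
         + x * integral (cbox 0 (2*pi)) (\<lambda>t. (R *\<^sub>R of_complex (cis t)) ^ m * circle_resolvent x R t)"
proof -
  let ?u = "\<lambda>t. R *\<^sub>R (of_complex (cis t) :: 'a)"
  have step: "?u t ^ Suc m * circle_resolvent x R t = ?u t ^ m + x * (?u t ^ m * circle_resolvent x R t)" for t
  proof -
    have "(?u t - x) * circle_resolvent x R t = 1"
      using alg_inverse[OF alg_invertible_circle[OF assms]] by (simp add: circle_resolvent_def)
    then have "?u t * circle_resolvent x R t = 1 + x * circle_resolvent x R t"
      by (simp add: algebra_simps)
    moreover have "?u t ^ m * x = x * ?u t ^ m"
      by (simp add: scaleR_of_complex_cis of_complex_power[symmetric] of_complex_commute)
    ultimately show ?thesis
      by (simp only: power_Suc2 mult.assoc distrib_left mult_1_right) (simp only: mult.assoc[symmetric])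
  qed
  have int: "(\<lambda>t. ?u t ^ m * circle_resolvent x R t) integrable_on cbox 0 (2*pi)"
    "(\<lambda>t. ?u t ^ m) integrable_on cbox 0 (2*pi)"
    using continuous_on_circle_resolvent_angle[OF assms]
    by (intro integrable_continuous continuous_intros; assumption)+
  have "integral (cbox 0 (2*pi)) (\<lambda>t. ?u t ^ Suc m * circle_resolvent x R t)
      = integral (cbox 0 (2*pi)) (\<lambda>t. ?u t ^ m) + integral (cbox 0 (2*pi)) (\<lambda>t. x * (?u t ^ m * circle_resolvent x R t))"
    unfolding step by (rule integral_add[OF int(2) integrable_on_mult_right[OF int(1)]])
  then show ?thesis by (simp only: integral_left_mult[OF int(1)])
qed

lemma circle_resolvent_moment:
  assumes "r0 \<le> R"
  shows "integral (cbox 0 (2*pi)) (\<lambda>t. (R *\<^sub>R of_complex (cis t)) ^ Suc n * circle_resolvent x R t)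
       = (2*pi) *\<^sub>R x ^ n"
proof (induction n)
  case 0
  show ?case
    using circle_resolvent_moment_Suc[OF assms, of 0] circle_resolvent_integral_eq_0[OF assms]
    by (simp add: box_real)
next
  case (Suc n)
  then show ?case
    using circle_resolvent_moment_Suc[OF assms, of "Suc n"] integral_circle_power_eq_0[of "Suc n" R]
    by (simp add: mult_scaleR_right)
qed

end

section \<open>Spectral radius and norms of self-adjoint elements\<close>

lemma alg_spectrum_nonempty: "alg_spectrum (x::'a::unital_cstar_algebra) \<noteq> {}"
proof
  assume "alg_spectrum x = {}"
  then have inv: "alg_invertible (of_complex z - x)" for z
    by (metis empty_iff mem_alg_spectrum_iff alg_invertible_minus_commute)
  \<comment> \<open>on the circle of radius 0 the resolvent is constant\<close>
  have "integral (cbox 0 (2*pi)) (circle_resolvent x 0) = 0"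
    by (rule circle_resolvent_integral_eq_0[of 0]) (auto intro: inv)
  then have "alg_inverse (- x) = 0" by (simp add: circle_resolvent_def[abs_def])
  moreover have "alg_invertible (- x)" using inv[of 0] by simp
  ultimately show False using alg_inverse_nonzero by blast
qed

lemma spectral_radius_nonneg: "0 \<le> spectral_radius (x::'a::unital_cstar_algebra)"
  using alg_spectrum_nonempty[of x] cmod_le_spectral_radius by (meson all_not_in_conv norm_ge_zero order_trans)

lemma spectral_radius_power_le:
  fixes x :: "'a::unital_cstar_algebra"
  assumes n: "n \<ge> 1"
  shows "spectral_radius x ^ n \<le> norm (x ^ n)"
proof -
  have "cmod z \<le> root n (norm (x ^ n))" if "z \<in> alg_spectrum x" for z
  proof -
    have "cmod z ^ n \<le> norm (x ^ n)"
      using cmod_le_norm_of_mem_alg_spectrum[OF power_mem_alg_spectrum[OF that]] by (simp add: norm_power)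
    then have "root n (cmod z ^ n) \<le> root n (norm (x ^ n))" using n by simp
    then show ?thesis using n by (simp add: real_root_power_cancel)
  qed
  then have "spectral_radius x \<le> root n (norm (x ^ n))"
    unfolding spectral_radius_def using alg_spectrum_nonempty by (intro cSup_least) auto
  then have "spectral_radius x ^ n \<le> root n (norm (x ^ n)) ^ n"
    using spectral_radius_nonneg by (rule power_mono)
  also have "\<dots> = norm (x ^ n)" using n by (simp add: real_root_pow_pos2)
  finally show ?thesis .
qed

lemma norm_power_eq_if_spectral_radius_eq_norm:
  fixes x :: "'a::unital_cstar_algebra"
  assumes "spectral_radius x = norm x"
  shows "norm (x ^ n) = norm x ^ n"
proof (cases "n = 0")
  case False
  then show ?thesis
    using spectral_radius_power_le[of n x] assms norm_power_ineq[of x n] by simp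
qed simp

lemma norm_power_le_of_invertible_outside:
  fixes x :: "'a::unital_cstar_algebra"
  assumes R: "0 < R" and invertible: "\<And>z. R \<le> cmod z \<Longrightarrow> alg_invertible (of_complex z - x)"
  obtains M where "\<And>n. norm (x ^ n) \<le> M * R ^ Suc n"
proof -
  note moment = circle_resolvent_moment[OF less_imp_le[OF R] invertible order_refl]
  note cont = continuous_on_circle_resolvent_angle[OF less_imp_le[OF R] invertible order_refl]
  have "bounded (circle_resolvent x R ` cbox 0 (2*pi))"
    by (intro compact_imp_bounded compact_continuous_image compact_cbox cont)
  then obtain M where M: "\<And>t. t \<in> cbox 0 (2*pi) \<Longrightarrow> norm (circle_resolvent x R t) \<le> M"
    unfolding bounded_iff by blast
  \<comment> \<open>Cauchy's formula: \<open>2\<pi> x^n\<close> is the integral of \<open>u^(n+1) (u - x)\<inverse>\<close> over \<open>|u| = R\<close>\<close>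
  have "norm (x ^ n) \<le> M * R ^ Suc n" for n
  proof -
    let ?f = "\<lambda>t. (R *\<^sub>R of_complex (cis t)) ^ Suc n * circle_resolvent x R t"
    have "?f integrable_on cbox 0 (2*pi)" by (intro integrable_continuous continuous_intros cont)
    then have integral: "(?f has_integral (2*pi) *\<^sub>R x ^ n) (cbox 0 (2*pi))"
      using integrable_integral moment by fastforce
    have bound: "norm (?f t) \<le> R ^ Suc n * M" if "t \<in> cbox 0 (2*pi)" for t
    proof -
      have "norm (?f t) \<le> norm (R *\<^sub>R (of_complex (cis t) :: 'a)) ^ Suc n * norm (circle_resolvent x R t)"
        by (intro order_trans[OF norm_mult_ineq] mult_right_mono norm_power_ineq) simp
      also have "\<dots> \<le> R ^ Suc n * M" using R M[OF that] by (simp add: mult_left_mono)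
      finally show ?thesis .
    qed
    have "0 \<le> R ^ Suc n * M"
      using R order_trans[OF norm_ge_zero M[of 0]] by simp
    from has_integral_bound[OF this integral bound]
    have "2 * pi * norm (x ^ n) \<le> R ^ Suc n * M * (2 * pi)" by simp
    then show ?thesis by (simp add: mult.commute)
  qed
  then show ?thesis by (rule that)
qed

lemma norm_selfadjoint_le:
  fixes h :: "'a::unital_cstar_algebra"
  assumes h: "cstar h = h" and r: "0 \<le> r" and spectrum: "\<And>z. z \<in> alg_spectrum h \<Longrightarrow> cmod z \<le> r"
  shows "norm h \<le> r"
proof (rule field_le_epsilon)
  fix e :: real assume e: "0 < e"
  have "alg_invertible (of_complex z - h)" if "r + e \<le> cmod z" for z
  proof -
    have "z \<notin> alg_spectrum h" using spectrum[of z] that e by linarith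
    then show ?thesis by (simp add: mem_alg_spectrum_iff alg_invertible_minus_commute)
  qed
  then obtain M where M: "\<And>n. norm (h ^ n) \<le> M * (r + e) ^ Suc n"
    using norm_power_le_of_invertible_outside[of "r + e" h] r e by (metis add_nonneg_pos)
  \<comment> \<open>otherwise \<open>\<parallel>h^(2^N)\<parallel> = \<parallel>h\<parallel>^(2^N)\<close> outgrows \<open>M (r + e)^(2^N + 1)\<close>\<close>
  show "norm h \<le> r + e"
  proof (rule ccontr)
    assume "\<not> norm h \<le> r + e"
    then have q: "1 < norm h / (r + e)" using r e by simp
    obtain N where N: "M * (r + e) < (norm h / (r + e)) ^ N" using real_arch_pow[OF q] by blast
    have "(norm h / (r + e)) ^ N \<le> (norm h / (r + e)) ^ (2 ^ N)"
      using q by (intro power_increasing) (auto intro: less_imp_le)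
    also have "\<dots> \<le> M * (r + e)"
      using M[of "2 ^ N"] norm_power_2_power_selfadjoint[OF h, of N] r e
      by (simp add: power_divide divide_le_eq)
    finally show False using N by simp
  qed
qed

section \<open>Positive elements\<close>

definition alg_positive :: "'a::unital_cstar_algebra \<Rightarrow> bool" where
  "alg_positive h \<longleftrightarrow> cstar h = h \<and> (\<forall>z\<in>alg_spectrum h. 0 \<le> Re z)"

lemma mem_alg_spectrum_of_real_diff:
  "z \<in> alg_spectrum h \<longleftrightarrow> of_real t - z \<in> alg_spectrum (of_real t - h :: 'a::unital_cstar_algebra)"
proof -
  have "of_real t - h - of_complex (of_real t - z) = - (h - of_complex z)"
    by (simp add: of_complex_diff of_complex_of_real)
  then show ?thesis by (simp only: mem_alg_spectrum_iff alg_invertible_uminus)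
qed

lemma alg_positive_iff_norm_diff_le:
  fixes h :: "'a::unital_cstar_algebra"
  assumes h: "cstar h = h" and t: "norm h \<le> t"
  shows "alg_positive h \<longleftrightarrow> norm (of_real t - h) \<le> t"
proof
  assume positive: "alg_positive h"
  show "norm (of_real t - h) \<le> t"
  proof (rule norm_selfadjoint_le)
    show "cstar (of_real t - h) = of_real t - h" by (simp add: cstar_diff h)
    show "0 \<le> t" using t norm_ge_zero order_trans by blast
  next
    fix w assume "w \<in> alg_spectrum (of_real t - h)"
    then have w: "of_real t - w \<in> alg_spectrum h"
      using mem_alg_spectrum_of_real_diff[of "of_real t - w" h t] by simp
    have "Im w = 0" using alg_spectrum_selfadjoint_real[OF h w] by simp
    moreover have "0 \<le> t - Re w" using positive w by (auto simp: alg_positive_def)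
    moreover have "cmod (of_real t - w) \<le> t" using cmod_le_norm_of_mem_alg_spectrum[OF w] t by simp
    ultimately show "cmod w \<le> t" by (simp add: cmod_def)
  qed
next
  assume norm: "norm (of_real t - h) \<le> t"
  have "0 \<le> Re z" if "z \<in> alg_spectrum h" for z
  proof -
    have "cmod (of_real t - z) \<le> t"
      using cmod_le_norm_of_mem_alg_spectrum[of "of_real t - z"] norm that
      by (meson mem_alg_spectrum_of_real_diff order_trans)
    then show ?thesis using abs_Re_le_cmod[of "of_real t - z"] by simp
  qed
  with h show "alg_positive h" by (simp add: alg_positive_def)
qed

lemma alg_positive_add:
  fixes h k :: "'a::unital_cstar_algebra"
  assumes "alg_positive h" "alg_positive k"
  shows "alg_positive (h + k)"
proof -
  have h: "cstar h = h" and k: "cstar k = k" using assms by (auto simp: alg_positive_def)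
  have "norm (of_real (norm h) - h) \<le> norm h" "norm (of_real (norm k) - k) \<le> norm k"
    using assms alg_positive_iff_norm_diff_le[OF h order_refl] alg_positive_iff_norm_diff_le[OF k order_refl]
    by auto
  moreover have "of_real (norm h + norm k) - (h + k) = (of_real (norm h) - h) + (of_real (norm k) - k)"
    by (simp add: algebra_simps)
  ultimately have "norm (of_real (norm h + norm k) - (h + k)) \<le> norm h + norm k"
    by (metis add_mono norm_triangle_ineq order_trans)
  moreover have "cstar (h + k) = h + k" by (simp add: cstar_add h k)
  ultimately show ?thesis using alg_positive_iff_norm_diff_le norm_triangle_ineq by blast
qed

lemma alg_positive_square:
  fixes u :: "'a::unital_cstar_algebra"
  assumes u: "cstar u = u"
  shows "alg_positive (u * u)"
  unfolding alg_positive_def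
proof (intro conjI ballI)
  show "cstar (u * u) = u * u" by (simp add: cstar_mult u)
  fix z assume "z \<in> alg_spectrum (u * u)"
  then obtain v where "v \<in> alg_spectrum u" "z = v * v" by (rule alg_spectrum_square)
  then show "0 \<le> Re z" using alg_spectrum_selfadjoint_real[OF u] by simp
qed

lemma alg_positive_projection:
  fixes e :: "'a::unital_cstar_algebra"
  assumes "e * e = e" "cstar e = e"
  shows "alg_positive e"
  using assms alg_spectrum_quadratic[of e 1] by (fastforce simp: alg_positive_def)

lemma alg_positive_eq_0:
  fixes w :: "'a::unital_cstar_algebra"
  assumes "alg_positive w" "\<And>z. z \<in> alg_spectrum w \<Longrightarrow> Re z \<le> 0"
  shows "w = 0"
proof -
  have w: "cstar w = w" using assms(1) by (simp add: alg_positive_def)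
  have "z = 0" if "z \<in> alg_spectrum w" for z
    using alg_spectrum_selfadjoint_real[OF w that] assms that
    by (force simp: alg_positive_def complex_eq_iff)
  then have "norm w \<le> 0" by (intro norm_selfadjoint_le[OF w]) auto
  then show ?thesis by simp
qed

lemma cstar_imaginary_part:
  fixes y :: "'a::unital_cstar_algebra"
  shows "cstar (of_complex \<i> * (y - cstar y)) = of_complex \<i> * (y - cstar y)"
proof -
  have "cstar (of_complex \<i> * (y - cstar y)) = (cstar y - y) * of_complex (- \<i>)"
    by (simp add: cstar_mult cstar_diff cstar_cstar cstar_of_complex)
  also have "\<dots> = of_complex \<i> * (y - cstar y)"
    by (simp add: of_complex_uminus of_complex_commute[symmetric] algebra_simps)
  finally show ?thesis .
qed

lemma real_imaginary_parts_sum_squares: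
  fixes y :: "'a::unital_cstar_algebra"
  shows "(y + cstar y) * (y + cstar y) + (of_complex \<i> * (y - cstar y)) * (of_complex \<i> * (y - cstar y))
       = (y * cstar y + y * cstar y) + (cstar y * y + cstar y * y)"
proof -
  have "(of_complex \<i> * (y - cstar y)) * (of_complex \<i> * (y - cstar y)) = - ((y - cstar y) * (y - cstar y))"
  proof -
    have "(of_complex \<i> * (y - cstar y)) * (of_complex \<i> * (y - cstar y))
        = (of_complex \<i> * of_complex \<i>) * ((y - cstar y) * (y - cstar y))"
      by (metis of_complex_commute mult.assoc)
    also have "of_complex \<i> * of_complex \<i> = (- 1 :: 'a)"
      by (simp add: of_complex_mult[symmetric] of_complex_uminus)
    finally show ?thesis by simp
  qed
  then show ?thesis by (simp add: algebra_simps)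
qed

lemma alg_spectrum_neg_double_idempotent:
  fixes e :: "'a::unital_cstar_algebra"
  assumes "e * e = e" "z \<in> alg_spectrum (- (e + e))"
  shows "z = 0 \<or> z = - 2"
proof (rule alg_spectrum_quadratic[OF _ assms(2)])
  have "of_complex (- 2) = - (1 + 1 :: 'a)"
    by (metis of_complex_1 of_complex_add of_complex_uminus one_add_one)
  moreover have "(- (e + e)) * (- (e + e)) = (e + e) + (e + e)"
    by (simp only: minus_mult_minus distrib_left distrib_right assms(1))
  moreover have "- (1 + 1 :: 'a) * (- (e + e)) = (e + e) + (e + e)"
    by (simp only: minus_mult_minus distrib_left distrib_right mult_1_left)
  ultimately show "(- (e + e)) * (- (e + e)) = of_complex (- 2) * (- (e + e))"
    by simp
qed

lemma cstar_mult_self_eq_neg_projection: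
  fixes y e :: "'a::unital_cstar_algebra"
  assumes e: "e * e = e" "cstar e = e" and y: "cstar y * y = - e"
  shows "e = 0"
proof -
  define w where "w = y * cstar y + y * cstar y"
  have "w = (y + cstar y) * (y + cstar y) + (of_complex \<i> * (y - cstar y)) * (of_complex \<i> * (y - cstar y))
      + (e + e)"
    unfolding real_imaginary_parts_sum_squares w_def y by simp
  then have "alg_positive w"
    using e by (simp only: alg_positive_add alg_positive_square alg_positive_projection
        cstar_add cstar_cstar add.commute cstar_imaginary_part)
  moreover have "Re z \<le> 0" if z: "z \<in> alg_spectrum w" for z
  proof (cases "z = 0")
    case False
    have "w = (y + y) * cstar y" by (simp add: w_def algebra_simps)
    then have "z \<in> alg_spectrum (cstar y * (y + y))" using alg_spectrum_mult_commute z False by simp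
    then have "z \<in> alg_spectrum (- (e + e))" by (simp add: distrib_left y)
    then show ?thesis using alg_spectrum_neg_double_idempotent[OF e(1)] by force
  qed simp
  ultimately have "w = 0" by (rule alg_positive_eq_0)
  then have "y * cstar y = 0" by (simp add: w_def flip: scaleR_2)
  then have "cstar y = 0" using cstar_identity[of "cstar y"] by (simp add: cstar_cstar)
  then show ?thesis using y by simp
qed

section \<open>Binomial expansion of \<open>(a*)^n a^n\<close>\<close>

lemma sum_scaleR_choose_Suc:
  fixes f :: "nat \<Rightarrow> 'a::real_vector"
  shows "(\<Sum>j\<le>Suc n. real (Suc n choose j) *\<^sub>R f j)
       = (\<Sum>j\<le>n. real (n choose j) *\<^sub>R f j) + (\<Sum>j\<le>n. real (n choose j) *\<^sub>R f (Suc j))"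
proof -
  have "(\<Sum>j\<le>Suc n. real (Suc n choose j) *\<^sub>R f j)
      = f 0 + (\<Sum>j\<le>n. real (n choose Suc j) *\<^sub>R f (Suc j)) + (\<Sum>j\<le>n. real (n choose j) *\<^sub>R f (Suc j))"
    by (simp add: sum.atMost_Suc_shift scaleR_add_left sum.distrib add.assoc del: sum.atMost_Suc)
  also have "f 0 + (\<Sum>j\<le>n. real (n choose Suc j) *\<^sub>R f (Suc j)) = (\<Sum>j\<le>Suc n. real (n choose j) *\<^sub>R f j)"
    by (simp add: sum.atMost_Suc_shift del: sum.atMost_Suc)
  finally show ?thesis by simp
qed

lemma Cab_one_eq_sum_scaleR:
  "Cab_one c b k = (\<Sum>j\<le>k. real (k choose j) *\<^sub>R ((-1) ^ j *\<^sub>R (c ^ (k - j) * b ^ j)))"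
  unfolding Cab_one_def
proof (intro sum.cong refl)
  fix j
  have "((-1) ^ j * of_nat (k choose j) :: 'a) = of_real ((-1) ^ j * real (k choose j))" by simp
  then show "((-1) ^ j * of_nat (k choose j)) * (c ^ (k - j) * b ^ j)
      = real (k choose j) *\<^sub>R ((-1) ^ j *\<^sub>R (c ^ (k - j) * b ^ j))"
    by (simp only: scaleR_conv_of_real[symmetric]) (simp add: mult.commute)
qed

lemma Cab_one_Suc:
  fixes c b :: "'a::unital_cstar_algebra"
  shows "Cab_one c b (Suc k) = c * Cab_one c b k - Cab_one c b k * b"
proof -
  define f where "f j = ((-1::real) ^ j) *\<^sub>R (c ^ (Suc k - j) * b ^ j)" for j
  have "Cab_one c b (Suc k) = (\<Sum>j\<le>k. real (k choose j) *\<^sub>R f j) + (\<Sum>j\<le>k. real (k choose j) *\<^sub>R f (Suc j))"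
    unfolding Cab_one_eq_sum_scaleR f_def[symmetric] by (rule sum_scaleR_choose_Suc)
  also have "(\<Sum>j\<le>k. real (k choose j) *\<^sub>R f j) = c * Cab_one c b k"
    unfolding Cab_one_eq_sum_scaleR sum_distrib_left
    by (intro sum.cong refl) (simp add: f_def Suc_diff_le mult.assoc)
  also have "(\<Sum>j\<le>k. real (k choose j) *\<^sub>R f (Suc j)) = - (Cab_one c b k * b)"
    unfolding Cab_one_eq_sum_scaleR sum_distrib_right sum_negf[symmetric]
    by (intro sum.cong refl) (simp add: f_def mult.assoc power_commutes)
  finally show ?thesis by simp
qed

lemma alternating_sum_choose_eq_0:
  assumes "n > 0"
  shows "(\<Sum>k\<le>n. (-1) ^ k * of_nat (n choose k) :: 'a::ring_1) = 0"
proof -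
  have "(\<Sum>k\<le>n. (-1) ^ k * of_nat (n choose k) :: int) = 0" by (rule choose_alternating_sum[OF assms])
  then have "of_int (\<Sum>k\<le>n. (-1) ^ k * of_nat (n choose k) :: int) = (0::'a)" by simp
  then show ?thesis by simp
qed

lemma Cab_one_self: "n > 0 \<Longrightarrow> Cab_one b b n = (0::'a::unital_cstar_algebra)"
proof -
  assume "n > 0"
  have "Cab_one b b n = (\<Sum>k\<le>n. (-1) ^ k * of_nat (n choose k)) * b ^ n"
    unfolding Cab_one_def sum_distrib_right
    by (intro sum.cong refl) (simp add: power_add[symmetric])
  then show ?thesis using alternating_sum_choose_eq_0[OF \<open>n > 0\<close>, where 'a='a] by simp
qed

lemma rho_self: "rho b (b::'a::unital_cstar_algebra) = 0"
proof -
  have "\<forall>\<^sub>F n in sequentially. ereal (root n (norm (Cab_one b b n))) = 0"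
    unfolding eventually_sequentially by (intro exI[of _ 1]) (simp add: Cab_one_self)
  then have "(\<lambda>n. ereal (root n (norm (Cab_one b b n)))) \<longlonglongrightarrow> 0" by (rule tendsto_eventually)
  then show ?thesis unfolding rho_def by (intro lim_imp_Limsup) simp_all
qed

lemma power_mult_power_eq_sum_Cab_one_mult:
  fixes a b c :: "'a::unital_cstar_algebra"
  assumes ba: "b * a = 1"
  shows "c ^ n * a ^ n = (\<Sum>k\<le>n. real (n choose k) *\<^sub>R (Cab_one c b k * a ^ k))"
proof (induction n)
  case (Suc n)
  define f where "f k = Cab_one c b k * a ^ k" for k
  have step: "c * Cab_one c b k * a ^ k * a = f (Suc k) + f k" for k
  proof -
    have "c * Cab_one c b k = Cab_one c b (Suc k) + Cab_one c b k * b" by (simp add: Cab_one_Suc)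
    moreover have "b * (a ^ k * a) = a ^ k"
      by (metis ba mult.assoc mult.left_neutral power_Suc power_Suc2)
    ultimately show ?thesis by (simp add: f_def distrib_right mult.assoc power_commutes)
  qed
  have "c ^ Suc n * a ^ Suc n = c * (c ^ n * a ^ n) * a" by (simp add: mult.assoc power_commutes)
  also have "\<dots> = (\<Sum>k\<le>n. real (n choose k) *\<^sub>R (c * Cab_one c b k * a ^ k * a))"
    unfolding Suc sum_distrib_left sum_distrib_right by (simp add: mult.assoc)
  also have "\<dots> = (\<Sum>k\<le>n. real (n choose k) *\<^sub>R f (Suc k)) + (\<Sum>k\<le>n. real (n choose k) *\<^sub>R f k)"
    by (simp add: step scaleR_add_right sum.distrib)
  also have "\<dots> = (\<Sum>k\<le>Suc n. real (Suc n choose k) *\<^sub>R f k)"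
    by (subst sum_scaleR_choose_Suc) (rule add.commute)
  finally show ?case by (simp add: f_def)
qed (simp add: Cab_one_def)

lemma power_mult_power_eq_sum_mult_Cab_one:
  fixes b c d :: "'a::unital_cstar_algebra"
  assumes dc: "d * c = 1"
  shows "d ^ n * b ^ n = (\<Sum>k\<le>n. real (n choose k) *\<^sub>R ((-1) ^ k *\<^sub>R (d ^ k * Cab_one c b k)))"
proof (induction n)
  case (Suc n)
  define g where "g k = ((-1::real) ^ k) *\<^sub>R (d ^ k * Cab_one c b k)" for k
  have step: "(-1::real) ^ k *\<^sub>R (d * d ^ k * Cab_one c b k * b) = g k + g (Suc k)" for k
  proof -
    have "d * d ^ k * c = d ^ k"
      by (metis dc mult.assoc mult.right_neutral power_Suc power_Suc2)
    then have "d * d ^ k * Cab_one c b k * b = d ^ k * Cab_one c b k - d ^ Suc k * Cab_one c b (Suc k)"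
      by (simp add: Cab_one_Suc mult.assoc right_diff_distrib) (simp add: mult.assoc[symmetric])
    then show ?thesis by (simp add: g_def scaleR_diff_right)
  qed
  have "d ^ Suc n * b ^ Suc n = d * (d ^ n * b ^ n) * b" by (simp add: mult.assoc power_commutes)
  also have "\<dots> = (\<Sum>k\<le>n. real (n choose k) *\<^sub>R ((-1) ^ k *\<^sub>R (d * d ^ k * Cab_one c b k * b)))"
    unfolding Suc sum_distrib_left sum_distrib_right by (simp add: mult.assoc)
  also have "\<dots> = (\<Sum>k\<le>n. real (n choose k) *\<^sub>R g k) + (\<Sum>k\<le>n. real (n choose k) *\<^sub>R g (Suc k))"
    by (simp add: step scaleR_add_right sum.distrib)
  also have "\<dots> = (\<Sum>k\<le>Suc n. real (Suc n choose k) *\<^sub>R g k)"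
    by (rule sum_scaleR_choose_Suc[symmetric])
  finally show ?case by (simp add: g_def)
qed (simp add: Cab_one_def)

lemma limsup_root_eq_0_imp_le_geometric:
  fixes \<delta> :: "nat \<Rightarrow> real"
  assumes nonneg: "\<And>n. 0 \<le> \<delta> n" and limsup: "limsup (\<lambda>n. ereal (root n (\<delta> n))) = 0" and "0 < \<epsilon>"
  obtains K where "\<And>k. \<delta> k \<le> K * \<epsilon> ^ k"
proof -
  have "limsup (\<lambda>n. ereal (root n (\<delta> n))) < ereal \<epsilon>" using limsup \<open>0 < \<epsilon>\<close> by simp
  from Limsup_lessD[OF this] obtain N where N: "\<And>n. n \<ge> N \<Longrightarrow> root n (\<delta> n) < \<epsilon>"
    unfolding eventually_sequentially by auto
  define K where "K = 1 + (\<Sum>k<Suc N. \<delta> k / \<epsilon> ^ k)"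
  have "\<delta> k \<le> K * \<epsilon> ^ k" for k
  proof (cases "k \<le> N")
    case True
    have "\<delta> k / \<epsilon> ^ k \<le> (\<Sum>k<Suc N. \<delta> k / \<epsilon> ^ k)"
      by (rule member_le_sum) (use True nonneg \<open>0 < \<epsilon>\<close> in auto)
    then have "\<delta> k / \<epsilon> ^ k \<le> K" unfolding K_def by simp
    then show ?thesis using \<open>0 < \<epsilon>\<close> by (simp add: divide_le_eq)
  next
    case False
    then have "\<delta> k = root k (\<delta> k) ^ k" using real_root_pow_pos2[OF _ nonneg] by simp
    also have "\<dots> \<le> \<epsilon> ^ k" using N[of k] False by (intro power_mono) (auto simp: nonneg)
    also have "\<dots> \<le> K * \<epsilon> ^ k"
    proof -
      have "0 \<le> (\<Sum>k<Suc N. \<delta> k / \<epsilon> ^ k)" using nonneg \<open>0 < \<epsilon>\<close> by (intro sum_nonneg) simp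
      then have "1 \<le> K" by (simp add: K_def)
      then show ?thesis using mult_right_mono[of 1 K "\<epsilon> ^ k"] \<open>0 < \<epsilon>\<close> by simp
    qed
    finally show ?thesis .
  qed
  then show ?thesis by (rule that)
qed

lemma le_1_of_binomial_bound:
  fixes \<delta> :: "nat \<Rightarrow> real" and \<gamma> :: real
  assumes nonneg: "\<And>n. 0 \<le> \<delta> n" and limsup: "limsup (\<lambda>n. ereal (root n (\<delta> n))) = 0"
    and "0 \<le> \<gamma>" and bound: "\<And>n. \<gamma> ^ (2 * n) \<le> (\<Sum>k\<le>n. real (n choose k) * \<delta> k * \<gamma> ^ k)"
  shows "\<gamma> \<le> 1"
proof (rule ccontr)
  assume "\<not> \<gamma> \<le> 1"
  then have \<gamma>: "1 < \<gamma>" "1 < \<gamma>\<^sup>2" by (simp_all add: one_less_power)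
  \<comment> \<open>with \<open>\<delta> k \<le> K \<epsilon>^k\<close> the bound becomes \<open>\<gamma>^(2n) \<le> K (1 + \<epsilon> \<gamma>)^n\<close>; choose \<open>\<epsilon>\<close> with \<open>1 + \<epsilon> \<gamma> < \<gamma>^2\<close>\<close>
  define \<epsilon> where "\<epsilon> = (\<gamma>\<^sup>2 - 1) / (2 * \<gamma>)"
  have \<epsilon>: "0 < \<epsilon>" "1 + \<epsilon> * \<gamma> = (1 + \<gamma>\<^sup>2) / 2"
    using \<gamma> unfolding \<epsilon>_def by (auto simp: field_simps)
  obtain K where K: "\<And>k. \<delta> k \<le> K * \<epsilon> ^ k"
    using limsup_root_eq_0_imp_le_geometric[OF nonneg limsup \<epsilon>(1)] by blast
  define q where "q = \<gamma>\<^sup>2 / (1 + \<epsilon> * \<gamma>)"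
  have "q ^ n \<le> K" for n
  proof -
    have "(\<gamma>\<^sup>2) ^ n \<le> (\<Sum>k\<le>n. real (n choose k) * (K * \<epsilon> ^ k) * \<gamma> ^ k)"
      unfolding power_mult[symmetric]
      by (intro order_trans[OF bound] sum_mono mult_right_mono mult_left_mono K) (use \<open>0 \<le> \<gamma>\<close> in auto)
    also have "\<dots> = K * (\<epsilon> * \<gamma> + 1) ^ n"
      by (simp add: binomial_ring sum_distrib_left power_mult_distrib mult_ac)
    moreover have "0 < (1 + \<epsilon> * \<gamma>) ^ n" using \<epsilon> \<gamma> by (simp add: add_pos_pos)
    ultimately show ?thesis by (simp add: q_def power_divide pos_divide_le_eq add.commute)
  qed
  moreover have "0 < \<epsilon> * \<gamma>" using \<gamma> \<epsilon> by simp
  then have "1 < q" using \<epsilon>(2) \<gamma>(2) unfolding q_def by (subst less_divide_eq_1_pos) auto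
  then obtain n where "K < q ^ n" using real_arch_pow by blast
  ultimately show False by (meson not_le)
qed

section \<open>Unitaries\<close>

lemma cmod_eq_1_of_mem_alg_spectrum:
  fixes x y :: "'a::unital_cstar_algebra"
  assumes "x * y = 1" "y * x = 1" "norm x \<le> 1" "norm y \<le> 1" "z \<in> alg_spectrum x"
  shows "cmod z = 1"
proof -
  have "cmod z \<le> 1" using cmod_le_norm_of_mem_alg_spectrum[OF assms(5)] assms(3) by simp
  moreover have "cmod (inverse z) \<le> 1"
    using cmod_le_norm_of_mem_alg_spectrum[OF alg_spectrum_inverse(2)[OF assms(1,2,5)]] assms(4) by simp
  then have "1 \<le> cmod z" using alg_spectrum_inverse(1)[OF assms(1,2,5)] by (simp add: norm_inverse inverse_le_1_iff)
  ultimately show ?thesis by simp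
qed

lemma norm_unitary: "cstar u * u = 1 \<Longrightarrow> norm (u::'a::unital_cstar_algebra) = 1"
  using cstar_identity[of u] by (simp add: power2_eq_1_iff) (metis norm_ge_zero neg_0_le_iff_le not_one_le_zero)

lemma spectral_radius_unitary:
  fixes u :: "'a::unital_cstar_algebra"
  assumes "alg_unitary u"
  shows "spectral_radius u = 1"
proof -
  have "cstar u * u = 1" "u * cstar u = 1" using assms by (auto simp: alg_unitary_def)
  moreover from this have "norm u = 1" "norm (cstar u) = 1" by (simp_all add: norm_unitary)
  ultimately have "cmod ` alg_spectrum u = {1}"
    using cmod_eq_1_of_mem_alg_spectrum[of u "cstar u"] alg_spectrum_nonempty[of u] by auto
  then show ?thesis by (simp add: spectral_radius_def)
qed

lemma norm_le_1_of_rho_eq_0: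
  fixes a b :: "'a::unital_cstar_algebra"
  assumes ba: "b * a = 1" and rho: "rho (cstar a) b = 0" and radius: "spectral_radius a = norm a"
  shows "norm a \<le> 1"
proof (rule le_1_of_binomial_bound[OF norm_ge_zero rho[unfolded rho_def] norm_ge_zero])
  fix n
  have "norm a ^ (2 * n) = norm (cstar a ^ n * a ^ n)"
    using cstar_identity[of "a ^ n"] norm_power_eq_if_spectral_radius_eq_norm[OF radius]
    by (simp add: cstar_power power_mult power_mult_distrib mult.commute)
  also have "\<dots> \<le> (\<Sum>k\<le>n. real (n choose k) * norm (Cab_one (cstar a) b k * a ^ k))"
    unfolding power_mult_power_eq_sum_Cab_one_mult[OF ba] by (rule order_trans[OF norm_sum]) simp
  also have "\<dots> \<le> (\<Sum>k\<le>n. real (n choose k) * norm (Cab_one (cstar a) b k) * norm a ^ k)"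
  proof (intro sum_mono)
    fix k
    have "norm (Cab_one (cstar a) b k * a ^ k) \<le> norm (Cab_one (cstar a) b k) * norm a ^ k"
      using norm_mult_ineq[of "Cab_one (cstar a) b k" "a ^ k"] norm_power_eq_if_spectral_radius_eq_norm[OF radius]
      by simp
    then show "real (n choose k) * norm (Cab_one (cstar a) b k * a ^ k)
        \<le> real (n choose k) * norm (Cab_one (cstar a) b k) * norm a ^ k"
      by (simp add: mult.assoc mult_left_mono)
  qed
  finally show "norm a ^ (2 * n) \<le> (\<Sum>k\<le>n. real (n choose k) * norm (Cab_one (cstar a) b k) * norm a ^ k)" .
qed

lemma norm_inverse_le_1_of_rho_eq_0:
  fixes a b :: "'a::unital_cstar_algebra"
  assumes ab: "a * b = 1" and rho: "rho (cstar a) b = 0" and radius: "spectral_radius b = norm b"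
  shows "norm b \<le> 1"
proof (rule le_1_of_binomial_bound[OF norm_ge_zero rho[unfolded rho_def] norm_ge_zero])
  fix n
  have "cstar b * cstar a = 1" by (metis ab cstar_1 cstar_mult)
  note expansion = power_mult_power_eq_sum_mult_Cab_one[OF this]
  have "norm b ^ (2 * n) = norm (cstar b ^ n * b ^ n)"
    using cstar_identity[of "b ^ n"] norm_power_eq_if_spectral_radius_eq_norm[OF radius]
    by (simp add: cstar_power power_mult power_mult_distrib mult.commute)
  also have "\<dots> \<le> (\<Sum>k\<le>n. real (n choose k) * norm (cstar b ^ k * Cab_one (cstar a) b k))"
    unfolding expansion by (rule order_trans[OF norm_sum]) (simp add: abs_mult power_abs)
  also have "\<dots> \<le> (\<Sum>k\<le>n. real (n choose k) * norm (Cab_one (cstar a) b k) * norm b ^ k)"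
  proof (intro sum_mono)
    fix k
    have "norm (cstar b ^ k * Cab_one (cstar a) b k) \<le> norm b ^ k * norm (Cab_one (cstar a) b k)"
      using norm_mult_ineq[of "cstar b ^ k" "Cab_one (cstar a) b k"]
        mult_right_mono[OF norm_power_ineq[of "cstar b" k] norm_ge_zero[of "Cab_one (cstar a) b k"]]
      by simp
    then show "real (n choose k) * norm (cstar b ^ k * Cab_one (cstar a) b k)
        \<le> real (n choose k) * norm (Cab_one (cstar a) b k) * norm b ^ k"
      by (simp add: mult_left_mono mult_ac)
  qed
  finally show "norm b ^ (2 * n) \<le> (\<Sum>k\<le>n. real (n choose k) * norm (Cab_one (cstar a) b k) * norm b ^ k)" .
qed

lemma selfadjoint_square_eq_1:
  fixes p q :: "'a::unital_cstar_algebra"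
  assumes p: "cstar p = p" and inverse: "p * q = 1" "q * p = 1" and "norm p \<le> 1" "norm q \<le> 1"
  shows "p * p = 1"
proof -
  have "w = 0" if "w \<in> alg_spectrum (p * p - 1)" for w
  proof -
    have "\<not> alg_invertible (p * p - of_complex (w + 1))"
      using that by (simp add: mem_alg_spectrum_iff of_complex_add algebra_simps)
    then obtain v where v: "v \<in> alg_spectrum p" "w + 1 = v * v"
      using alg_spectrum_square by (metis mem_alg_spectrum_iff)
    have "Im v = 0" "cmod v = 1"
      using alg_spectrum_selfadjoint_real[OF p v(1)] cmod_eq_1_of_mem_alg_spectrum[OF inverse assms(4,5) v(1)]
      by simp_all
    then have "\<bar>Re v\<bar> = 1" by (simp add: cmod_def)
    then have "Re v * Re v = 1" by (metis abs_mult_self_eq mult_1_left)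
    then have "v * v = 1" using \<open>Im v = 0\<close> by (simp add: complex_eq_iff)
    then show ?thesis using v(2) by simp
  qed
  then have "norm (p * p - 1) \<le> 0"
    by (intro norm_selfadjoint_le) (auto simp: cstar_diff cstar_mult p)
  then show ?thesis by simp
qed

lemma unitary_of_norm_le_1:
  fixes a b :: "'a::unital_cstar_algebra"
  assumes ab: "a * b = 1" and ba: "b * a = 1" and "norm a \<le> 1" "norm b \<le> 1"
  shows "alg_unitary a"
proof -
  define p where "p = cstar a * a"
  have inverse: "p * (b * cstar b) = 1" "(b * cstar b) * p = 1"
    unfolding p_def using ab ba
    by (metis cstar_1 cstar_mult mult.assoc mult.left_neutral)+
  have p: "cstar p = p" by (simp add: p_def cstar_mult cstar_cstar)
  have "norm p \<le> 1" "norm (b * cstar b) \<le> 1"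
    unfolding p_def using cstar_identity[of a] cstar_identity[of "cstar b"] assms(3,4)
    by (simp_all add: cstar_cstar power_le_one)
  then have pp: "p * p = 1" by (rule selfadjoint_square_eq_1[OF p inverse])
  define e where "e = (1/2::real) *\<^sub>R (1 - p)"
  have ee: "e * e = e"
  proof -
    have "(1 - p) * (1 - p) = (1 - p) + (1 - p)" by (simp add: algebra_simps pp)
    then show ?thesis by (simp add: e_def scaleR_2[symmetric])
  qed
  have "cstar e = e" by (simp add: e_def cstar_scaleR cstar_diff p)
  moreover have "cstar (a * e) * (a * e) = e * (p * e)"
    using \<open>cstar e = e\<close> by (simp add: p_def cstar_mult mult.assoc)
  moreover have "p * e = - e" by (simp add: e_def algebra_simps pp)
  ultimately have "cstar (a * e) * (a * e) = - e" "cstar e = e" using ee by simp_all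
  then have "e = 0" using ee cstar_mult_self_eq_neg_projection by blast
  then have "cstar a * a = 1" by (simp add: e_def p_def)
  moreover have "cstar a = b" using left_inverse_eq_right_inverse[OF ab \<open>cstar a * a = 1\<close>] .
  ultimately show ?thesis using ab by (simp add: alg_unitary_def)
qed

theorem mainTheorem14:
  fixes a a_inv :: "'a::unital_cstar_algebra"
  assumes "a * a_inv = 1" and "a_inv * a = 1"
  shows "alg_unitary a \<longleftrightarrow>
           (rho (cstar a) a_inv = 0 \<and> spectral_radius a = norm a \<and> spectral_radius a_inv = norm a_inv)"
proof
  assume unitary: "alg_unitary a"
  then have "cstar a = a_inv"
    using left_inverse_eq_right_inverse[OF assms(1)] by (simp add: alg_unitary_def)
  moreover from this have "alg_unitary a_inv" using unitary by (auto simp: alg_unitary_def cstar_cstar)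
  ultimately show "rho (cstar a) a_inv = 0 \<and> spectral_radius a = norm a \<and> spectral_radius a_inv = norm a_inv"
    using unitary by (simp add: rho_self spectral_radius_unitary norm_unitary alg_unitary_def)
next
  assume "rho (cstar a) a_inv = 0 \<and> spectral_radius a = norm a \<and> spectral_radius a_inv = norm a_inv"
  then have "norm a \<le> 1" "norm a_inv \<le> 1"
    using norm_le_1_of_rho_eq_0[OF assms(2)] norm_inverse_le_1_of_rho_eq_0[OF assms(1)] by auto
  then show "alg_unitary a" by (rule unitary_of_norm_le_1[OF assms])
qed

end
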